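(* Let $p$ be a prime and let $G$ be a group of order $p^7$ and nilpotency class $4$ with $|\gamma_2(G)| = p^5$. Then $\gamma_2(G)$ is abelian.
   Context: $\gamma_2(G)$ denotes the commutator subgroup of $G$. *)

theory Defs
  imports "HOL-Algebra.Algebra"
begin

definition comm_subgroup :: "('a, 'b) monoid_scheme \<Rightarrow> 'a set \<Rightarrow> 'a set \<Rightarrow> 'a set" where
  "comm_subgroup G H K = generate G
     (\<Union>h \<in> H. \<Union>k \<in> K. { h \<otimes>\<^bsub>G\<^esub> k \<otimes>\<^bsub>G\<^esub> inv\<^bsub>G\<^esub> h \<otimes>\<^bsub>G\<^esub> inv\<^bsub>G\<^esub> k })"

fun lower_central :: "('a, 'b) monoid_scheme \<Rightarrow> nat \<Rightarrow> 'a set" where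
  "lower_central G 0 = carrier G"
| "lower_central G (Suc 0) = carrier G"
| "lower_central G (Suc (Suc n)) = comm_subgroup G (lower_central G (Suc n)) (carrier G)"

definition nilpotency_class :: "('a, 'b) monoid_scheme \<Rightarrow> nat \<Rightarrow> bool" where
  "nilpotency_class G c \<longleftrightarrow>
     lower_central G (Suc c) = {\<one>\<^bsub>G\<^esub>} \<and>
     (\<forall>i \<le> c. lower_central G i \<noteq> {\<one>\<^bsub>G\<^esub>})"

end

(* Class 4 gives [\<gamma>\<^sub>3, \<gamma>\<^sub>2] \<subseteq> \<gamma>\<^sub>5 = 1: for x \<in> \<gamma>\<^sub>3 the map g \<mapsto> [x, g] has central values
   in \<gamma>\<^sub>4, so it is a homomorphism into an abelian group and kills \<gamma>\<^sub>2.
   Since |G : \<gamma>\<^sub>2| = p\<^sup>2, two elements a, b generate G modulo \<gamma>\<^sub>2. Then K = \<langle>[a, b], \<gamma>\<^sub>3\<rangle>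
   is normal (as [G, \<gamma>\<^sub>2] \<subseteq> \<gamma>\<^sub>3) and contains the commutators of all pairs of generators
   of G, so G/K is abelian and \<gamma>\<^sub>2 = K. The generators of K commute pairwise. *)

theory Submission
  imports Defs "HOL-Computational_Algebra.Primes"
begin

abbreviation commutator :: "('a, 'b) monoid_scheme \<Rightarrow> 'a \<Rightarrow> 'a \<Rightarrow> 'a" where
  "commutator G x y \<equiv> x \<otimes>\<^bsub>G\<^esub> y \<otimes>\<^bsub>G\<^esub> inv\<^bsub>G\<^esub> x \<otimes>\<^bsub>G\<^esub> inv\<^bsub>G\<^esub> y"

lemma commutator_mem_comm_subgroup:
  "h \<in> H \<Longrightarrow> k \<in> K \<Longrightarrow> commutator G h k \<in> comm_subgroup G H K"
  unfolding comm_subgroup_def by (rule generate.incl) blast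

lemma lower_central_Suc:
  "0 < n \<Longrightarrow> lower_central G (Suc n) = comm_subgroup G (lower_central G n) (carrier G)"
  by (cases n) auto

context group
begin

lemma inv_mult_cancel_left [simp]: "x \<in> carrier G \<Longrightarrow> y \<in> carrier G \<Longrightarrow> inv x \<otimes> (x \<otimes> y) = y"
  by (simp add: m_assoc [symmetric])

lemma mult_inv_cancel_left [simp]: "x \<in> carrier G \<Longrightarrow> y \<in> carrier G \<Longrightarrow> x \<otimes> (inv x \<otimes> y) = y"
  by (simp add: m_assoc [symmetric])

lemma commutator_eq_one_iff:
  assumes "x \<in> carrier G" "y \<in> carrier G"
  shows "commutator G x y = \<one> \<longleftrightarrow> x \<otimes> y = y \<otimes> x"
  using assms by (simp add: inv_solve_right' del: inv_mult_group)

lemma inv_commutator: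
  "x \<in> carrier G \<Longrightarrow> y \<in> carrier G \<Longrightarrow> inv (commutator G x y) = commutator G y x"
  by (simp add: inv_mult_group m_assoc)

lemma comm_subgroup_is_subgroup:
  "H \<subseteq> carrier G \<Longrightarrow> K \<subseteq> carrier G \<Longrightarrow> subgroup (comm_subgroup G H K) G"
  unfolding comm_subgroup_def by (rule generate_is_subgroup) (fastforce intro!: m_closed inv_closed)

lemma comm_subgroup_incl:
  "subgroup N G \<Longrightarrow> (\<And>h k. h \<in> H \<Longrightarrow> k \<in> K \<Longrightarrow> commutator G h k \<in> N)
    \<Longrightarrow> comm_subgroup G H K \<subseteq> N"
  unfolding comm_subgroup_def by (rule generate_subgroup_incl) auto

lemma mono_comm_subgroup:
  "H \<subseteq> H' \<Longrightarrow> comm_subgroup G H K \<subseteq> comm_subgroup G H' K"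
  unfolding comm_subgroup_def by (rule mono_generate) blast

lemma normal_if_commutators_closed:
  assumes N: "subgroup N G" and closed: "\<And>g n. g \<in> carrier G \<Longrightarrow> n \<in> N \<Longrightarrow> commutator G g n \<in> N"
  shows "N \<lhd> G"
  unfolding normal_inv_iff
proof (intro conjI ballI N)
  fix g n assume g: "g \<in> carrier G" and n: "n \<in> N"
  then have "n \<in> carrier G" using N subgroup.subset by blast
  then have "g \<otimes> n \<otimes> inv g = commutator G g n \<otimes> n"
    using g by (simp add: m_assoc)
  then show "g \<otimes> n \<otimes> inv g \<in> N" using closed g n N subgroup.m_closed by metis
qed

lemma subgroup_commutator_preimage:
  assumes N: "N \<lhd> G" and x: "x \<in> carrier G"
  shows "subgroup {y \<in> carrier G. commutator G x y \<in> N} G"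
proof (rule subgroup.intro)
  interpret N: subgroup N G using N normal_imp_subgroup by blast
  fix g h assume "g \<in> {y \<in> carrier G. commutator G x y \<in> N}" "h \<in> {y \<in> carrier G. commutator G x y \<in> N}"
  then have g: "g \<in> carrier G" "commutator G x g \<in> N" and h: "h \<in> carrier G" "commutator G x h \<in> N"
    by auto
  have "commutator G x g \<otimes> (g \<otimes> commutator G x h \<otimes> inv g) \<in> N"
    using N g h by (simp add: normal.inv_op_closed2)
  also have "commutator G x g \<otimes> (g \<otimes> commutator G x h \<otimes> inv g) = commutator G x (g \<otimes> h)"
    using x g h by (simp add: m_assoc inv_mult_group)
  finally show "g \<otimes> h \<in> {y \<in> carrier G. commutator G x y \<in> N}" using g h by simp
next
  interpret N: subgroup N G using N normal_imp_subgroup by blast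
  fix g assume "g \<in> {y \<in> carrier G. commutator G x y \<in> N}"
  then have g: "g \<in> carrier G" "commutator G x g \<in> N" by auto
  have "inv g \<otimes> inv (commutator G x g) \<otimes> g \<in> N"
    using N g by (simp add: normal.inv_op_closed1)
  also have "inv g \<otimes> inv (commutator G x g) \<otimes> g = commutator G x (inv g)"
    using x g by (simp add: m_assoc inv_mult_group)
  finally show "inv g \<in> {y \<in> carrier G. commutator G x y \<in> N}" using g by simp
next
  show "\<one> \<in> {y \<in> carrier G. commutator G x y \<in> N}"
    using x N normal_imp_subgroup subgroup.one_closed by fastforce
qed auto

lemma subgroup_centralizer:
  "x \<in> carrier G \<Longrightarrow> subgroup {y \<in> carrier G. x \<otimes> y = y \<otimes> x} G"
proof -
  assume x: "x \<in> carrier G"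
  then have "{y \<in> carrier G. x \<otimes> y = y \<otimes> x} = {y \<in> carrier G. commutator G x y \<in> {\<one>}}"
    using commutator_eq_one_iff by auto
  then show ?thesis using subgroup_commutator_preimage[OF one_is_normal x] by simp
qed

lemma generate_commute:
  assumes S: "S \<subseteq> carrier G" and comm: "\<And>s t. s \<in> S \<Longrightarrow> t \<in> S \<Longrightarrow> s \<otimes> t = t \<otimes> s"
    and x: "x \<in> generate G S" and y: "y \<in> generate G S"
  shows "x \<otimes> y = y \<otimes> x"
proof -
  have "generate G S \<subseteq> {y \<in> carrier G. s \<otimes> y = y \<otimes> s}" if "s \<in> S" for s
    using that S comm by (intro generate_subgroup_incl subgroup_centralizer) auto
  then have "x \<otimes> s = s \<otimes> x" if "s \<in> S" for s
    using that x by force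
  then have "generate G S \<subseteq> {y \<in> carrier G. x \<otimes> y = y \<otimes> x}"
    using x S generate_in_carrier by (intro generate_subgroup_incl subgroup_centralizer) auto
  then show ?thesis using y by blast
qed

lemma comm_group_generate:
  assumes "S \<subseteq> carrier G" "\<And>s t. s \<in> S \<Longrightarrow> t \<in> S \<Longrightarrow> s \<otimes> t = t \<otimes> s"
  shows "comm_group (G\<lparr>carrier := generate G S\<rparr>)"
  by (rule group.group_comm_groupI)
    (use assms generate_is_subgroup subgroup_imp_group generate_commute in auto)

lemma comm_subgroup_subset_normal_of_generators:
  assumes N: "N \<lhd> G" and S: "S \<subseteq> carrier G" and gen: "generate G S = carrier G"
    and comm: "\<And>s t. s \<in> S \<Longrightarrow> t \<in> S \<Longrightarrow> commutator G s t \<in> N"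
  shows "comm_subgroup G (carrier G) (carrier G) \<subseteq> N"
proof -
  interpret N: subgroup N G using N normal_imp_subgroup by blast
  have commutator_preimage_eq_carrier:
    "{y \<in> carrier G. commutator G x y \<in> N} = carrier G"
    if "x \<in> carrier G" "\<And>s. s \<in> S \<Longrightarrow> commutator G x s \<in> N" for x
  proof -
    have "generate G S \<subseteq> {y \<in> carrier G. commutator G x y \<in> N}"
      using that S by (intro generate_subgroup_incl subgroup_commutator_preimage N) auto
    then show ?thesis using gen by blast
  qed
  have S_commutators: "commutator G s y \<in> N" if s: "s \<in> S" and y: "y \<in> carrier G" for s y
  proof -
    have "{y \<in> carrier G. commutator G s y \<in> N} = carrier G"
      using s S comm by (intro commutator_preimage_eq_carrier) auto
    then show ?thesis using y by blast
  qed
  have "commutator G x s \<in> N" if x: "x \<in> carrier G" and s: "s \<in> S" for x s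
  proof -
    have "commutator G x s = inv (commutator G s x)"
      using x s S by (simp add: inv_commutator subset_iff)
    then show ?thesis using S_commutators[OF s x] by simp
  qed
  then have "commutator G x y \<in> N" if "x \<in> carrier G" "y \<in> carrier G" for x y
    using commutator_preimage_eq_carrier[of x] that by blast
  then show ?thesis by (intro comm_subgroup_incl N.subgroup_axioms)
qed

lemma comm_subgroup_subset_normal_of_two_generators:
  assumes N: "N \<lhd> G" and ab: "a \<in> carrier G" "b \<in> carrier G" and M: "M \<subseteq> carrier G"
    and gen: "generate G ({a, b} \<union> M) = carrier G" and "commutator G a b \<in> N"
    and M_commutators: "\<And>g m. g \<in> carrier G \<Longrightarrow> m \<in> M \<Longrightarrow> commutator G g m \<in> N"
  shows "comm_subgroup G (carrier G) (carrier G) \<subseteq> N"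
proof (rule comm_subgroup_subset_normal_of_generators[OF N _ gen])
  interpret N: subgroup N G using N normal_imp_subgroup by blast
  show S: "{a, b} \<union> M \<subseteq> carrier G" using ab M by blast
  have "commutator G b a \<in> N"
    using N.m_inv_closed[OF \<open>commutator G a b \<in> N\<close>] inv_commutator ab by simp
  moreover have "commutator G m g \<in> N" if "g \<in> carrier G" "m \<in> M" for g m
    using N.m_inv_closed[OF M_commutators[OF that]] inv_commutator that M by (metis subsetD)
  ultimately show "commutator G s t \<in> N" if "s \<in> {a, b} \<union> M" "t \<in> {a, b} \<union> M" for s t
    using that S M_commutators \<open>commutator G a b \<in> N\<close> by (auto simp: m_assoc)
qed

lemma commute_comm_subgroup_if_commutators_central:
  assumes x: "x \<in> carrier G"
    and central: "\<And>g h. g \<in> carrier G \<Longrightarrow> h \<in> carrier G \<Longrightarrow> commutator G x g \<otimes> h = h \<otimes> commutator G x g"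
    and y: "y \<in> comm_subgroup G (carrier G) (carrier G)"
  shows "x \<otimes> y = y \<otimes> x"
proof -
  define f where "f g = commutator G x g" for g
  have f_carrier: "f g \<in> carrier G" if "g \<in> carrier G" for g
    using x that by (simp add: f_def)
  have f_mult: "f (g \<otimes> h) = f g \<otimes> f h" if g: "g \<in> carrier G" and h: "h \<in> carrier G" for g h
  proof -
    have "g \<otimes> f h \<otimes> inv g = f h \<otimes> g \<otimes> inv g"
      using central[OF h g] by (simp add: f_def)
    also have "\<dots> = f h" using g f_carrier[OF h] by (simp add: m_assoc)
    finally have "g \<otimes> f h \<otimes> inv g = f h" .
    then have "f g \<otimes> f h = f g \<otimes> (g \<otimes> f h \<otimes> inv g)" by simp
    also have "\<dots> = f (g \<otimes> h)" using x g h by (simp add: f_def m_assoc inv_mult_group)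
    finally show ?thesis by simp
  qed
  interpret f: group_hom G G f
    by unfold_locales (auto intro!: homI f_carrier f_mult)
  have "comm_subgroup G (carrier G) (carrier G) \<subseteq> {y \<in> carrier G. x \<otimes> y = y \<otimes> x}"
  proof (rule comm_subgroup_incl[OF subgroup_centralizer[OF x]])
    fix u v assume u: "u \<in> carrier G" and v: "v \<in> carrier G"
    have "f (commutator G u v) = commutator G (f u) (f v)"
      using u v by simp
    also have "\<dots> = \<one>"
      using commutator_eq_one_iff[OF f_carrier[OF u] f_carrier[OF v]] central[OF u f_carrier[OF v]]
      by (simp add: f_def)
    finally show "commutator G u v \<in> {y \<in> carrier G. x \<otimes> y = y \<otimes> x}"
      using commutator_eq_one_iff[OF x] u v by (simp add: f_def)
  qed
  then show ?thesis using y by blast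
qed

lemma lower_central_subgroup: "subgroup (lower_central G n) G"
proof (induction n)
  case 0
  then show ?case by (simp add: subgroup_self)
next
  case (Suc n)
  then have "lower_central G n \<subseteq> carrier G" using subgroup.subset by blast
  then show ?case
    by (cases "n = 0") (simp_all add: lower_central_Suc subgroup_self comm_subgroup_is_subgroup)
qed

lemma lower_central_subset: "lower_central G n \<subseteq> carrier G"
  using lower_central_subgroup subgroup.subset by blast

lemma lower_central_Suc_subset: "lower_central G (Suc n) \<subseteq> lower_central G n"
proof (induction n)
  case 0
  then show ?case by simp
next
  case (Suc n)
  then show ?case
    using lower_central_subset[of "Suc (Suc 0)"]
    by (cases "n = 0") (auto simp: lower_central_Suc mono_comm_subgroup)
qed

lemma commutator_mem_lower_central:
  "0 < n \<Longrightarrow> h \<in> lower_central G n \<Longrightarrow> g \<in> carrier G \<Longrightarrow> commutator G h g \<in> lower_central G (Suc n)"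
  by (simp add: lower_central_Suc commutator_mem_comm_subgroup)

lemma commutator_mem_lower_central':
  assumes "0 < n" "h \<in> lower_central G n" "g \<in> carrier G"
  shows "commutator G g h \<in> lower_central G (Suc n)"
proof -
  have "inv (commutator G h g) \<in> lower_central G (Suc n)"
    using assms by (simp add: commutator_mem_lower_central lower_central_subgroup subgroup.m_inv_closed)
  then show ?thesis using assms lower_central_subset inv_commutator by (metis subsetD)
qed

lemma lower_central_commute_derived:
  assumes trivial: "lower_central G (Suc (Suc n)) = {\<one>}" and "0 < n"
    and x: "x \<in> lower_central G n" and y: "y \<in> lower_central G 2"
  shows "x \<otimes> y = y \<otimes> x"
proof (rule commute_comm_subgroup_if_commutators_central)
  show "x \<in> carrier G" using x lower_central_subset by blast
  show "y \<in> comm_subgroup G (carrier G) (carrier G)" using y by (simp add: numeral_eq_Suc)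
  fix g h assume g: "g \<in> carrier G" and h: "h \<in> carrier G"
  have "commutator G x g \<in> lower_central G (Suc n)"
    using assms g by (simp add: commutator_mem_lower_central)
  then have "commutator G (commutator G x g) h = \<one>"
    using trivial h commutator_mem_lower_central[of "Suc n"] by blast
  then show "commutator G x g \<otimes> h = h \<otimes> commutator G x g"
    using commutator_eq_one_iff \<open>commutator G x g \<in> lower_central G (Suc n)\<close> h lower_central_subset
    by blast
qed

lemma lower_central_two_eq_generate:
  assumes ab: "a \<in> carrier G" "b \<in> carrier G"
    and gen: "generate G ({a, b} \<union> lower_central G 2) = carrier G"
  shows "lower_central G 2 = generate G (insert (commutator G a b) (lower_central G 3))"
    (is "_ = ?K")
proof
  have "commutator G a b \<in> lower_central G 2"
    using ab by (simp add: numeral_eq_Suc commutator_mem_comm_subgroup)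
  then have generators: "insert (commutator G a b) (lower_central G 3) \<subseteq> lower_central G 2"
    using lower_central_Suc_subset[of 2] by (simp add: numeral_eq_Suc)
  then show K_sub: "?K \<subseteq> lower_central G 2"
    by (intro generate_subgroup_incl lower_central_subgroup)
  have \<gamma>\<^sub>3_sub: "lower_central G 3 \<subseteq> ?K" by (auto intro: generate.incl)
  have \<gamma>\<^sub>2_commutators: "commutator G g m \<in> ?K" if "g \<in> carrier G" "m \<in> lower_central G 2" for g m
    using commutator_mem_lower_central'[of 2 m g] that \<gamma>\<^sub>3_sub by (auto simp: numeral_eq_Suc)
  have "?K \<lhd> G"
  proof (rule normal_if_commutators_closed)
    show "subgroup ?K G"
      using generators lower_central_subset by (intro generate_is_subgroup) blast
    show "commutator G g k \<in> ?K" if "g \<in> carrier G" "k \<in> ?K" for g k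
      using \<gamma>\<^sub>2_commutators that K_sub by blast
  qed
  then have "comm_subgroup G (carrier G) (carrier G) \<subseteq> ?K"
    using \<gamma>\<^sub>2_commutators
    by (intro comm_subgroup_subset_normal_of_two_generators[OF _ ab lower_central_subset gen])
      (auto intro: generate.incl)
  then show "lower_central G 2 \<subseteq> ?K" by (simp add: numeral_eq_Suc)
qed

lemma comm_group_lower_central_two:
  assumes \<gamma>\<^sub>5: "lower_central G 5 = {\<one>}"
    and ab: "a \<in> carrier G" "b \<in> carrier G"
    and gen: "generate G ({a, b} \<union> lower_central G 2) = carrier G"
  shows "comm_group (G\<lparr>carrier := lower_central G 2\<rparr>)"
proof -
  let ?S = "insert (commutator G a b) (lower_central G 3)"
  have \<gamma>\<^sub>2_eq: "lower_central G 2 = generate G ?S"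
    by (rule lower_central_two_eq_generate[OF ab gen])
  have S_sub: "?S \<subseteq> lower_central G 2"
    by (subst \<gamma>\<^sub>2_eq) (auto intro: generate.incl)
  have \<gamma>\<^sub>3_commutes: "x \<otimes> y = y \<otimes> x" if "x \<in> lower_central G 3" "y \<in> lower_central G 2" for x y
    using lower_central_commute_derived[of 3 x y] \<gamma>\<^sub>5 that by (simp add: numeral_eq_Suc)
  have S_commute: "x \<otimes> y = y \<otimes> x" if x: "x \<in> ?S" and y: "y \<in> ?S" for x y
  proof -
    have "x \<in> lower_central G 2" "y \<in> lower_central G 2" using x y S_sub by blast+
    moreover have "x \<in> lower_central G 3 \<or> y \<in> lower_central G 3 \<or> x = y" using x y by blast
    ultimately show ?thesis using \<gamma>\<^sub>3_commutes[of x y] \<gamma>\<^sub>3_commutes[of y x] by metis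
  qed
  have "?S \<subseteq> carrier G" using S_sub lower_central_subset by blast
  from comm_group_generate[OF this S_commute] show ?thesis by (simp only: \<gamma>\<^sub>2_eq)
qed

lemma card_subgroup_prime_power:
  assumes p: "Factorial_Ring.prime (p::nat)" and order: "order G = p ^ n" and H: "subgroup H G"
  shows "\<exists>i \<le> n. card H = p ^ i"
proof -
  have "finite (carrier G)"
    using order p prime_gt_0_nat order_gt_0_iff_finite by simp
  then have "card H dvd p ^ n" unfolding order[symmetric] lagrange[OF H, symmetric] by simp
  then show ?thesis by (simp only: divides_primepow_nat[OF p])
qed

lemma card_subgroup_psubset_prime_power:
  assumes p: "Factorial_Ring.prime (p::nat)" and order: "order G = p ^ n"
    and H: "subgroup H G" "card H = p ^ i" and H': "subgroup H' G" "H \<subset> H'"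
  obtains j where "i < j" "j \<le> n" "card H' = p ^ j"
proof -
  obtain j where j: "j \<le> n" "card H' = p ^ j"
    using card_subgroup_prime_power[OF p order H'(1)] by blast
  have "finite (carrier G)"
    using order p prime_gt_0_nat order_gt_0_iff_finite by simp
  then have "card H < card H'"
    using H'(2) subgroup.subset[OF H'(1)] by (meson psubset_card_mono rev_finite_subset)
  then have "i < j" using H(2) j(2) p prime_gt_1_nat by (simp add: power_strict_increasing_iff)
  then show thesis using that j by blast
qed

lemma two_generators_mod_subgroup:
  assumes p: "Factorial_Ring.prime (p::nat)" and order: "order G = p ^ (k + 2)"
    and H: "subgroup H G" "card H = p ^ k"
  obtains a b where "a \<in> carrier G" "b \<in> carrier G" "generate G ({a, b} \<union> H) = carrier G"
proof -
  have "card H < order G"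
    unfolding order H(2) using prime_gt_1_nat[OF p] by (intro power_strict_increasing) auto
  then have "H \<noteq> carrier G" unfolding order_def by auto
  then obtain a where a: "a \<in> carrier G" "a \<notin> H" using H(1) subgroup.subset by blast
  define H1 where "H1 = generate G (insert a H)"
  have H1: "subgroup H1 G" unfolding H1_def using a H(1) subgroup.subset by (intro generate_is_subgroup) auto
  have "H \<subset> H1" using a unfolding H1_def by (auto intro: generate.incl)
  then obtain i where i: "k < i" "card H1 = p ^ i"
    using card_subgroup_psubset_prime_power[OF p order H H1] by blast
  show thesis
  proof (cases "H1 = carrier G")
    case True
    then show thesis using that[of a a] a by (simp add: H1_def)
  next
    case False
    then obtain b where b: "b \<in> carrier G" "b \<notin> H1" using H1 subgroup.subset by blast
    define H2 where "H2 = generate G ({a, b} \<union> H)"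
    have H2: "subgroup H2 G" unfolding H2_def using a b H(1) subgroup.subset by (intro generate_is_subgroup) auto
    have "H1 \<subseteq> H2" unfolding H1_def H2_def by (rule mono_generate) auto
    moreover have "b \<in> H2" unfolding H2_def by (auto intro: generate.incl)
    ultimately have "H1 \<subset> H2" using b by blast
    then obtain j where "i < j" "j \<le> k + 2" "card H2 = p ^ j"
      using card_subgroup_psubset_prime_power[OF p order H1 i(2) H2] by blast
    with i have "j = k + 2" by linarith
    with \<open>card H2 = p ^ j\<close> have card: "card H2 = card (carrier G)"
      using order unfolding order_def by simp
    have "finite (carrier G)"
      using order p prime_gt_0_nat order_gt_0_iff_finite by simp
    then have "H2 = carrier G" by (rule card_subset_eq[OF _ subgroup.subset[OF H2] card])
    then show thesis using that a b unfolding H2_def by blast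
  qed
qed

end

theorem lemma2p10:
  fixes G (structure) and p :: nat
  assumes "group G"
    and "Factorial_Ring.prime p"
    and "finite (carrier G)"
    and "order G = p ^ 7"
    and "nilpotency_class G 4"
    and "card (lower_central G 2) = p ^ 5"
  shows "comm_group (G\<lparr>carrier := lower_central G 2\<rparr>)"
proof -
  \<comment> \<open>finiteness of G is implied by its order and not used\<close>
  interpret group G by fact
  have "lower_central G 5 = {\<one>}"
    using assms(5) by (simp add: nilpotency_class_def)
  moreover obtain a b where "a \<in> carrier G" "b \<in> carrier G"
    and "generate G ({a, b} \<union> lower_central G 2) = carrier G"
    using two_generators_mod_subgroup[OF assms(2) _ lower_central_subgroup assms(6)] assms(4) by auto
  ultimately show ?thesis by (rule comm_group_lower_central_two)
qed

end
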